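(* Let $S^3$ be the group of unit quaternions (the unit sphere in $\mathbb R^4$ with quaternion multiplication), a compact topological group. Then $S^3$ admits no invariant binary closed $k$-network, i.e. there is no binary closed $k$-network $\mathcal N$ in $S^3$ such that $xAy\in\mathcal N$ for all $A\in\mathcal N$ and $x,y\in S^3$.
   Context: A family $\mathcal A$ of sets is linked if $A\cap B\neq\emptyset$ for all $A,B\in\mathcal A$; centered if every finite subfamily has nonempty intersection; binary if every linked subfamily of $\mathcal A$ is centered. A family $\mathcal N$ of closed subsets of a topological space $X$ is a closed $k$-network if for every open $U\subset X$ and every compact $K\subset U$ there is a finite $\mathcal F\subset\mathcal N$ with $K\subset\bigcup\mathcal F\subset U$. A family $\mathcal F$ of subsets of a group $G$ is invariant if $gF\in\mathcal F$ and $Fg\in\mathcal F$ for all $F\in\mathcal F$, $g\in G$. *)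

theory Defs
  imports "HOL-Analysis.Analysis"
begin

text \<open>Quaternions are modelled as vectors in real^4, components 1,2,3,4 = (re, i, j, k),
  with the Hamilton product.\<close>

definition qmult :: "real^4 \<Rightarrow> real^4 \<Rightarrow> real^4" where
  "qmult p q = (\<chi> n.
     if n = 1 then p$1*q$1 - p$2*q$2 - p$3*q$3 - p$4*q$4
     else if n = 2 then p$1*q$2 + p$2*q$1 + p$3*q$4 - p$4*q$3
     else if n = 3 then p$1*q$3 - p$2*q$4 + p$3*q$1 + p$4*q$2
     else p$1*q$4 + p$2*q$3 - p$3*q$2 + p$4*q$1)"

definition S3 :: "(real^4) set" where
  "S3 = sphere 0 1"

definition linked :: "'a set set \<Rightarrow> bool" where
  "linked \<A> \<longleftrightarrow> (\<forall>A\<in>\<A>. \<forall>B\<in>\<A>. A \<inter> B \<noteq> {})"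

definition centered :: "'a set set \<Rightarrow> bool" where
  "centered \<A> \<longleftrightarrow> (\<forall>\<F>. \<F> \<subseteq> \<A> \<and> finite \<F> \<and> \<F> \<noteq> {} \<longrightarrow> \<Inter>\<F> \<noteq> {})"

definition binary :: "'a set set \<Rightarrow> bool" where
  "binary \<A> \<longleftrightarrow> (\<forall>\<B>. \<B> \<subseteq> \<A> \<and> linked \<B> \<longrightarrow> centered \<B>)"

definition closed_k_network :: "'a topology \<Rightarrow> 'a set set \<Rightarrow> bool" where
  "closed_k_network X \<N> \<longleftrightarrow>
     (\<forall>N\<in>\<N>. closedin X N) \<and>
     (\<forall>U K. openin X U \<and> compactin X K \<and> K \<subseteq> U \<longrightarrow>
        (\<exists>\<F>. finite \<F> \<and> \<F> \<subseteq> \<N> \<and> K \<subseteq> \<Union>\<F> \<and> \<Union>\<F> \<subseteq> U))"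

end

theory Submission
  imports Defs
begin

text \<open>Suppose \<open>\<N>\<close> were an invariant binary closed \<open>k\<close>-network. Covering a small cap around
  \<open>1\<close> yields an infinite compact member \<open>A\<close> of \<open>\<N>\<close> close to \<open>1\<close>. Rotating a supporting hyperplane
  of \<open>A\<close> through the origin until it is tangent to \<open>A\<close>, and then tilting it slightly, produces a
  balanced chord: points \<open>x \<noteq> y\<close> of \<open>A\<close> and a vector \<open>Q\<close> of norm \<open>\<surd>3/2\<close> with \<open>0 < inner a Q\<close>
  on \<open>A\<close>. A left translation by a unit quaternion carries \<open>A\<close> to \<open>T \<in> \<N>\<close>, \<open>Q\<close> to a pure
  quaternion \<open>p\<close> and \<open>x, y\<close> to \<open>t, \<rho> t\<close>, where \<open>\<rho> z = (1/2 + p) z (1/2 + p)\<close> has order three and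
  every \<open>\<rho>\<close>-orbit has \<open>inner _ p\<close>-sum zero. Now \<open>T, \<rho> T, \<rho>\<^sup>2 T \<in> \<N>\<close> meet pairwise, so by
  binarity they have a common point, whose whole orbit lies in \<open>T\<close>: this contradicts
  \<open>0 < inner _ p\<close> on \<open>T\<close>.\<close>

definition qone :: "real^4" where
  "qone = (\<chi> i. if i = 1 then 1 else 0)"

definition qcnj :: "real^4 \<Rightarrow> real^4" where
  "qcnj u = (\<chi> i. if i = 1 then u$1 else - u$i)"

lemma inner_vec4: "inner (u::real^4) v = u$1 * v$1 + u$2 * v$2 + u$3 * v$3 + u$4 * v$4"
  by (simp add: inner_vec_def sum_4)

lemma norm_vec4_sq: "(norm (u::real^4))\<^sup>2 = (u$1)\<^sup>2 + (u$2)\<^sup>2 + (u$3)\<^sup>2 + (u$4)\<^sup>2"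
  by (simp add: power2_norm_eq_inner inner_vec4 power2_eq_square[symmetric])

lemma qmult_component:
  "qmult p q $ 1 = p$1 * q$1 - p$2 * q$2 - p$3 * q$3 - p$4 * q$4"
  "qmult p q $ 2 = p$1 * q$2 + p$2 * q$1 + p$3 * q$4 - p$4 * q$3"
  "qmult p q $ 3 = p$1 * q$3 - p$2 * q$4 + p$3 * q$1 + p$4 * q$2"
  "qmult p q $ 4 = p$1 * q$4 + p$2 * q$3 - p$3 * q$2 + p$4 * q$1"
  by (simp_all add: qmult_def)

lemma qone_component: "qone$1 = 1" "qone$2 = 0" "qone$3 = 0" "qone$4 = 0"
  by (simp_all add: qone_def)

lemma qcnj_component: "qcnj u $ 1 = u$1" "qcnj u $ 2 = - u$2" "qcnj u $ 3 = - u$3" "qcnj u $ 4 = - u$4"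
  by (simp_all add: qcnj_def)

lemma norm_qone [simp]: "norm qone = 1"
  by (simp add: norm_eq_sqrt_inner inner_vec4 qone_component)

lemma qmult_qone_right [simp]: "qmult z qone = z"
  by (simp add: vec_eq_iff forall_4 qmult_component qone_component)

lemma qmult_diff_right: "qmult u (v - w) = qmult u v - qmult u w"
  by (simp add: vec_eq_iff forall_4 qmult_component algebra_simps)

lemma qmult_scaleR_right: "qmult u (c *\<^sub>R v) = c *\<^sub>R qmult u v"
  by (simp add: vec_eq_iff forall_4 qmult_component algebra_simps)

lemma inner_qmult_left: "inner (qmult u v) (qmult u w) = (norm u)\<^sup>2 * inner v w"
  by (simp add: inner_vec4 norm_vec4_sq qmult_component) algebra

lemma norm_qcnj: "norm (qcnj u) = norm u"
  by (simp add: norm_eq_sqrt_inner inner_vec4 qcnj_component)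

lemma qmult_qcnj_self: "qmult (qcnj u) u = (norm u)\<^sup>2 *\<^sub>R qone"
  by (simp add: vec_eq_iff forall_4 qmult_component qcnj_component qone_component norm_vec4_sq)
    (simp add: power2_eq_square)

lemma qmult_qcnj_component1: "qmult (qcnj u) v $ 1 = inner u v"
  by (simp add: qmult_component qcnj_component inner_vec4)

text \<open>For a pure quaternion \<open>p\<close> of norm \<open>\<surd>3/2\<close>, \<open>1/2 + p\<close> is a primitive sixth root
  of unity, so \<open>z \<mapsto> (1/2 + p) z (1/2 + p)\<close> has order three.\<close>

definition hexroot :: "real^4 \<Rightarrow> real^4" where
  "hexroot p = (1/2) *\<^sub>R qone + p"

definition twist :: "real^4 \<Rightarrow> real^4 \<Rightarrow> real^4" where
  "twist p z = qmult (qmult (hexroot p) z) (hexroot p)"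

lemma hexroot_component:
  "hexroot p $ 1 = 1/2 + p$1" "hexroot p $ 2 = p$2" "hexroot p $ 3 = p$3" "hexroot p $ 4 = p$4"
  by (simp_all add: hexroot_def qone_component)

lemma norm_hexroot:
  assumes "p$1 = 0" "inner p p = 3/4"
  shows "norm (hexroot p) = 1"
  using assms by (simp add: norm_eq_sqrt_inner inner_vec4 hexroot_component)

lemma twist_eq:
  assumes p1: "p$1 = 0" and pp: "inner p p = 3/4"
  shows "twist p z = z - (3/2 * z$1 + inner z p) *\<^sub>R qone - (2 * inner z p - z$1) *\<^sub>R p"
proof -
  have "p$2 * p$2 + p$3 * p$3 + p$4 * p$4 = 3/4"
    using pp p1 by (simp add: inner_vec4)
  thus ?thesis
    unfolding twist_def vec_eq_iff forall_4 qmult_component hexroot_component qone_component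
      inner_vec4 p1 vector_minus_component vector_scaleR_component real_scaleR_def
    by (intro conjI; algebra)
qed

lemma twist_twist_twist:
  assumes p1: "p$1 = 0" and pp: "inner p p = 3/4"
  shows "twist p (twist p (twist p z)) = z"
proof -
  have "p$2 * p$2 + p$3 * p$3 + p$4 * p$4 = 3/4"
    using pp p1 by (simp add: inner_vec4)
  thus ?thesis
    unfolding twist_eq[OF assms] vec_eq_iff forall_4 qone_component inner_vec4 p1
      vector_minus_component vector_scaleR_component real_scaleR_def
    by (intro conjI; algebra)
qed

lemma inner_twist_orbit_sum:
  assumes p1: "p$1 = 0" and pp: "inner p p = 3/4"
  shows "inner z p + inner (twist p z) p + inner (twist p (twist p z)) p = 0"
proof -
  have "p$2 * p$2 + p$3 * p$3 + p$4 * p$4 = 3/4"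
    using pp p1 by (simp add: inner_vec4)
  thus ?thesis
    unfolding twist_eq[OF assms] qone_component inner_vec4 p1
      vector_minus_component vector_scaleR_component real_scaleR_def
    by algebra
qed

lemma binary_order3_orbit_in:
  assumes bin: "binary \<N>" and fff: "\<And>z. f (f (f z)) = z"
    and N: "T \<in> \<N>" "f ` T \<in> \<N>" "f ` f ` T \<in> \<N>"
    and t: "t \<in> T" "f t \<in> T"
  shows "\<exists>z\<in>T. f z \<in> T \<and> f (f z) \<in> T"
proof -
  let ?\<B> = "{T, f ` T, f ` f ` T}"
  have "t \<in> f ` f ` T"
    using t(2) by (metis fff imageI)
  hence "T \<noteq> {}" "T \<inter> f ` T \<noteq> {}" "f ` T \<inter> f ` f ` T \<noteq> {}" "T \<inter> f ` f ` T \<noteq> {}"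
    using t by blast+
  hence "linked ?\<B>"
    unfolding linked_def by (simp add: Int_commute)
  hence "centered ?\<B>"
    using bin N unfolding binary_def by simp
  hence "\<Inter>?\<B> \<noteq> {}"
    unfolding centered_def by blast
  then obtain z where z: "z \<in> T" "z \<in> f ` T" "z \<in> f ` f ` T"
    by auto
  then obtain a b where "a \<in> T" "z = f a" "b \<in> T" "z = f (f b)"
    by blast
  hence "f (f z) = a" "f z = b"
    using fff by metis+
  thus ?thesis
    using z \<open>a \<in> T\<close> \<open>b \<in> T\<close> by auto
qed

definition S3_invariant :: "(real^4) set set \<Rightarrow> bool" where
  "S3_invariant \<N> \<longleftrightarrow> (\<forall>A\<in>\<N>. \<forall>x\<in>S3. \<forall>y\<in>S3. (\<lambda>a. qmult (qmult x a) y) ` A \<in> \<N>)"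

lemma S3_invariant_image:
  "S3_invariant \<N> \<Longrightarrow> A \<in> \<N> \<Longrightarrow> norm x = 1 \<Longrightarrow> norm y = 1 \<Longrightarrow>
    (\<lambda>a. qmult (qmult x a) y) ` A \<in> \<N>"
  by (simp add: S3_invariant_def S3_def)

lemma S3_invariant_twist_image:
  assumes "S3_invariant \<N>" "T \<in> \<N>" "p$1 = 0" "inner p p = 3/4"
  shows "twist p ` T \<in> \<N>"
  using S3_invariant_image[OF assms(1,2)] norm_hexroot[OF assms(3,4)]
  by (simp add: twist_def[abs_def])

lemma no_positive_twist_pair:
  assumes bin: "binary \<N>" and inv: "S3_invariant \<N>" and T: "T \<in> \<N>"
    and p: "p$1 = 0" "inner p p = 3/4"
    and t: "t \<in> T" "twist p t \<in> T"
    and pos: "\<forall>a\<in>T. 0 < inner a p"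
  shows False
proof -
  have "twist p ` T \<in> \<N>" "twist p ` twist p ` T \<in> \<N>"
    using S3_invariant_twist_image[OF inv _ p] T by blast+
  then obtain z where "z \<in> T" "twist p z \<in> T" "twist p (twist p z) \<in> T"
    using binary_order3_orbit_in[OF bin twist_twist_twist[OF p] T _ _ t] by blast
  hence "0 < inner z p + inner (twist p z) p + inner (twist p (twist p z)) p"
    using pos by (simp add: add_pos_pos)
  thus False
    using inner_twist_orbit_sum[OF p] by simp
qed

lemma norm_diff_sq_unit:
  fixes x y :: "'a::real_inner"
  assumes "norm x = 1" "norm y = 1"
  shows "(norm (x - y))\<^sup>2 = 2 - 2 * inner x y"
  using assms by (simp add: norm_eq_1 power2_norm_eq_inner inner_diff_left inner_diff_right
      inner_commute)

text \<open>Left multiplication by the conjugate of \<open>(x - y) / \<bar>x - y\<bar>\<close> maps a balanced chord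
  \<open>x, y\<close> to a pair \<open>t, t - \<bar>x - y\<bar>\<close> whose second point is the twist of the first.\<close>

definition balanced_chord :: "'a::real_inner set \<Rightarrow> 'a \<Rightarrow> 'a \<Rightarrow> 'a \<Rightarrow> bool" where
  "balanced_chord A x y Q \<longleftrightarrow> x \<in> A \<and> y \<in> A \<and> x \<noteq> y \<and> inner (x - y) Q = 0 \<and>
     inner Q Q = 3/4 \<and> inner x Q = norm (x - y) / 4 \<and> (\<forall>a\<in>A. 0 < inner a Q)"

lemma no_balanced_chord:
  assumes bin: "binary \<N>" and inv: "S3_invariant \<N>" and A: "A \<in> \<N>" "A \<subseteq> S3"
    and chord: "balanced_chord A x y Q"
  shows False
proof -
  have xy: "x \<in> A" "y \<in> A" "x \<noteq> y" and Q: "inner (x - y) Q = 0" "inner Q Q = 3/4"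
    "inner x Q = norm (x - y) / 4" and pos: "\<forall>a\<in>A. 0 < inner a Q"
    using chord by (simp_all add: balanced_chord_def)
  have nxy: "norm x = 1" "norm y = 1"
    using xy A(2) by (auto simp: S3_def)
  define d where "d = norm (x - y)"
  have d: "0 < d"
    using xy by (simp add: d_def)
  define u where "u = (1/d) *\<^sub>R (x - y)"
  define c where "c = qcnj u"
  have nu: "norm u = 1" and nc: "norm c = 1"
    using d by (simp_all add: u_def c_def d_def norm_qcnj)
  define T where "T = qmult c ` A"
  have "T \<in> \<N>"
    using S3_invariant_image[OF inv A(1) nc norm_qone] by (simp add: T_def)
  define p where "p = qmult c Q"
  have p: "p$1 = 0" "inner p p = 3/4"
    using Q(1,2) nc by (simp_all add: p_def c_def qmult_qcnj_component1 u_def inner_qmult_left)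
  define t where "t = qmult c x"
  have "t$1 = inner u x"
    by (simp add: t_def c_def qmult_qcnj_component1)
  also have "\<dots> = (1 - inner x y) / d"
    using nxy by (simp add: u_def inner_diff_left inner_diff_right inner_commute norm_eq_1)
  also have "\<dots> = d / 2"
    using norm_diff_sq_unit[OF nxy] d by (simp add: d_def field_simps power2_eq_square)
  finally have t1: "t$1 = d / 2" .
  have tp: "inner t p = d / 4"
    using Q(3) nc by (simp add: t_def p_def inner_qmult_left d_def)
  have "twist p t = t - d *\<^sub>R qone"
    unfolding twist_eq[OF p] t1 tp by (simp add: algebra_simps)
  also have "\<dots> = qmult c y"
  proof -
    have "y = x - d *\<^sub>R u"
      using d by (simp add: u_def)
    thus ?thesis
      by (simp add: t_def qmult_diff_right qmult_scaleR_right c_def qmult_qcnj_self nu)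
  qed
  finally have "twist p t \<in> T"
    using xy by (simp add: T_def)
  moreover have "t \<in> T" "\<forall>a\<in>T. 0 < inner a p"
    using xy pos nc by (auto simp: T_def t_def p_def inner_qmult_left)
  ultimately show False
    using no_positive_twist_pair[OF bin inv \<open>T \<in> \<N>\<close> p] by blast
qed

lemma inner_ge_of_close_unit:
  fixes a x :: "'a::real_inner"
  assumes "norm a = 1" "norm x = 1" "norm (a - x) \<le> 1/4"
  shows "31/32 \<le> inner a x"
proof -
  have "(norm (a - x))\<^sup>2 \<le> (1/4)\<^sup>2"
    using assms(3) by (simp add: power_mono)
  thus ?thesis
    using norm_diff_sq_unit[OF assms(1,2)] by (simp add: power2_eq_square)
qed

lemma inner_midpoint_unit:
  fixes x y :: "'a::real_inner"
  assumes "norm x = 1" "norm y = 1"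
  shows "inner x (midpoint x y) = 1 - (norm (x - y))\<^sup>2 / 4"
    and "inner y (midpoint x y) = 1 - (norm (x - y))\<^sup>2 / 4"
    and "inner (midpoint x y) (midpoint x y) = 1 - (norm (x - y))\<^sup>2 / 4"
  using assms norm_diff_sq_unit[OF assms]
  by (simp_all add: midpoint_def inner_add_left inner_add_right inner_commute norm_eq_1
      algebra_simps)

lemma inner_tilted_direction:
  fixes x y e a :: "'a::real_inner" and d s :: real
  defines "w \<equiv> e - (s / d) *\<^sub>R (y - x)"
  assumes nx: "norm x = 1" and ny: "norm y = 1" and d: "norm (x - y) = d" "0 < d"
    and ne: "norm e = 1" and xe: "inner x e = 0" and ye: "inner y e = s * d"
  shows "inner x w = s * d / 2" and "inner y w = s * d / 2" and "inner w w = 1 - s\<^sup>2"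
    and "0 \<le> s \<Longrightarrow> inner a e - s * norm (a - x) \<le> inner (a - x) w"
proof -
  have ixy: "inner x y = 1 - d\<^sup>2 / 2"
    using norm_diff_sq_unit[OF nx ny] unfolding d(1) by linarith
  have "inner x w = inner x e - (s / d) * (inner x y - inner x x)"
    "inner y w = inner y e - (s / d) * (inner y y - inner y x)"
    unfolding w_def by (simp_all only: inner_diff_right inner_scaleR_right)
  thus "inner x w = s * d / 2" "inner y w = s * d / 2"
    using nx ny d xe ye ixy
    by (simp_all add: norm_eq_1 inner_commute field_simps power2_eq_square)
  define u where "u = (1/d) *\<^sub>R (y - x)"
  have w: "w = e - s *\<^sub>R u"
    by (simp add: w_def u_def)
  have nu: "norm u = 1"
    using d by (simp add: u_def norm_minus_commute)
  have "inner e u = s"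
    using ye xe d by (simp add: u_def inner_diff_right field_simps inner_commute)
  thus "inner w w = 1 - s\<^sup>2"
    using ne nu by (simp add: w inner_diff_left inner_diff_right inner_commute norm_eq_1
        power2_eq_square algebra_simps)
  assume "0 \<le> s"
  hence "s * inner (a - x) u \<le> s * norm (a - x)"
    using norm_cauchy_schwarz[of "a - x" u] nu by (intro mult_left_mono) auto
  thus "inner a e - s * norm (a - x) \<le> inner (a - x) w"
    using xe by (simp add: w inner_diff_left inner_diff_right)
qed

text \<open>The normal is \<open>e\<close>, tilted in the plane of \<open>e\<close> and \<open>y - x\<close> until \<open>x\<close> and \<open>y\<close> have equal
  height, with its component along the midpoint of \<open>x, y\<close> removed.\<close>

lemma exists_chord_normal:
  fixes x y e :: "'a::real_inner"
  defines "d \<equiv> norm (x - y)" and "s \<equiv> inner y e / norm (x - y)"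
  assumes nx: "norm x = 1" and ny: "norm y = 1" and xy: "x \<noteq> y" and dle: "d \<le> 1/4"
    and ne: "norm e = 1" and xe: "inner x e = 0" and s: "0 \<le> s" "s \<le> 1/100"
    and A: "\<forall>a\<in>A. norm a = 1 \<and> - d/100 \<le> inner a e - s * norm (a - x)"
  shows "\<exists>n. inner x n = 0 \<and> inner y n = 0 \<and> 1/2 \<le> inner n n \<and> (\<forall>a\<in>A. - d/50 \<le> inner a n)"
proof -
  have d: "0 < d"
    using xy by (simp add: d_def)
  define w where "w = e - (s / d) *\<^sub>R (y - x)"
  define k where "k = s * d / 2"
  have "norm (x - y) = d" "inner y e = s * d"
    using d by (simp_all add: d_def s_def)
  note w = inner_tilted_direction[OF nx ny this(1) d ne xe this(2), folded w_def k_def]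
  define m where "m = midpoint x y"
  define M where "M = 1 - d\<^sup>2 / 4"
  have m: "inner x m = M" "inner y m = M" "inner m m = M"
    using inner_midpoint_unit[OF nx ny] by (simp_all add: m_def M_def d_def)
  have d2: "d\<^sup>2 \<le> 1/16"
    using dle d power_mono[of d "1/4" 2] by (simp add: power2_eq_square)
  hence M: "63/64 \<le> M" "M \<le> 1"
    unfolding M_def by auto
  have wm: "inner w m = k"
    using w by (simp add: m_def midpoint_def inner_add_right inner_commute)
  define n where "n = w - (k/M) *\<^sub>R m"
  have nxy: "inner x n = 0" "inner y n = 0"
    using w m M by (simp_all add: n_def inner_diff_right)
  have k: "0 \<le> k" "k \<le> d / 200" "k / M \<le> d / 100"
    using s d M by (auto simp: k_def field_simps)
  have "inner n n = inner w w - 2 * (k/M) * inner w m + (k/M)\<^sup>2 * inner m m"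
    by (simp add: n_def inner_diff_left inner_diff_right inner_commute power2_eq_square
        algebra_simps)
  also have "\<dots> = 1 - s\<^sup>2 - k\<^sup>2 / M"
    unfolding w(3) wm m(3) using M by (simp add: field_simps power2_eq_square)
  finally have nn_eq: "inner n n = 1 - s\<^sup>2 - k\<^sup>2 / M" .
  have "s\<^sup>2 \<le> (1/100)\<^sup>2" "k\<^sup>2 \<le> (1/800)\<^sup>2"
    using s k dle by (auto intro!: power_mono)
  moreover have "k\<^sup>2 / M \<le> k\<^sup>2 / (1/2)"
    using M by (intro divide_left_mono) auto
  ultimately have nn: "1/2 \<le> inner n n"
    unfolding nn_eq by (simp add: power_divide)
  have "- d/50 \<le> inner a n" if aA: "a \<in> A" for a
  proof -
    have "inner a m \<le> norm a * norm m"
      by (rule norm_cauchy_schwarz)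
    moreover have "norm m \<le> 1"
      using m M by (simp add: norm_eq_sqrt_inner)
    ultimately have "inner (a - x) m \<le> d\<^sup>2 / 4"
      using A aA m by (simp add: inner_diff_left M_def)
    hence "(k/M) * inner (a - x) m \<le> (k/M) * (d\<^sup>2 / 4)"
      using k M by (intro mult_left_mono) auto
    also have "\<dots> \<le> (d / 100) * (1 / 4)"
      using k M d2 by (intro mult_mono) auto
    finally have "(k/M) * inner (a - x) m \<le> (d / 100) * (1 / 4)" .
    moreover have "inner a n = inner (a - x) n"
      using nxy(1) by (simp add: inner_diff_left)
    moreover have "\<dots> = inner (a - x) w - (k/M) * inner (a - x) m"
      by (simp add: n_def inner_diff_right)
    moreover have "- d/100 \<le> inner (a - x) w"
      using A aA w(4)[OF s(1), of a] by auto
    ultimately show ?thesis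
      using d by linarith
  qed
  thus ?thesis
    using nxy nn by blast
qed

lemma exists_sphere_coefficients:
  fixes N M d :: real
  assumes N: "1/2 \<le> N" and M: "63/64 \<le> M" "M \<le> 1" and d: "0 < d" "d \<le> 1/4"
  shows "\<exists>\<alpha> \<beta>. 0 \<le> \<alpha> \<and> \<alpha> \<le> 2 \<and> d/4 \<le> \<beta> \<and> \<beta> * M = d/4 \<and> \<alpha>\<^sup>2 * N + \<beta>\<^sup>2 * M = 3/4"
proof -
  define \<beta> where "\<beta> = d / (4 * M)"
  have \<beta>: "d/4 \<le> \<beta>" "\<beta> \<le> 1/2" "\<beta> * M = d/4"
    using M d by (auto simp: \<beta>_def field_simps)
  have "\<beta>\<^sup>2 * M \<le> \<beta>\<^sup>2"
    using M by (simp add: mult_left_le)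
  also have "\<dots> \<le> (1/2)\<^sup>2"
    using \<beta> d by (intro power_mono) auto
  finally have \<beta>M: "0 \<le> \<beta>\<^sup>2 * M" "\<beta>\<^sup>2 * M \<le> 1/4"
    using M by (simp_all add: power2_eq_square)
  define \<alpha> where "\<alpha> = sqrt ((3/4 - \<beta>\<^sup>2 * M) / N)"
  have "3/4 - \<beta>\<^sup>2 * M \<le> 4 * N"
    using N \<beta>M by linarith
  hence "(3/4 - \<beta>\<^sup>2 * M) / N \<le> 4"
    using N by (simp add: divide_le_eq)
  hence "\<alpha> \<le> 2"
    using real_sqrt_le_mono[of _ 4] by (simp add: \<alpha>_def)
  moreover have "0 \<le> \<alpha>" "\<alpha>\<^sup>2 * N = 3/4 - \<beta>\<^sup>2 * M"
    using N \<beta>M by (auto simp: \<alpha>_def)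
  ultimately show ?thesis
    using \<beta> by (intro exI[of _ \<alpha>] exI[of _ \<beta>]) auto
qed

lemma balanced_chord_of_normal:
  fixes x y n :: "'a::real_inner"
  defines "d \<equiv> norm (x - y)"
  assumes xy: "x \<in> A" "y \<in> A" "x \<noteq> y" and nxy: "inner x n = 0" "inner y n = 0"
    and nn: "1/2 \<le> inner n n"
    and A: "\<forall>a\<in>A. norm a = 1 \<and> norm (a - x) \<le> 1/4 \<and> norm (a - y) \<le> 1/4 \<and> - d/50 \<le> inner a n"
  shows "\<exists>Q. balanced_chord A x y Q"
proof -
  have nx: "norm x = 1" and ny: "norm y = 1" and dle: "d \<le> 1/4"
    using A xy by (auto simp: d_def norm_minus_commute)
  have d: "0 < d"
    using xy by (simp add: d_def)
  define m where "m = midpoint x y"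
  define M where "M = 1 - d\<^sup>2 / 4"
  have m: "inner x m = M" "inner y m = M" "inner m m = M"
    using inner_midpoint_unit[OF nx ny] by (simp_all add: m_def M_def d_def)
  have "d\<^sup>2 \<le> 1/16"
    using dle d power_mono[of d "1/4" 2] by (simp add: power2_eq_square)
  hence "63/64 \<le> M" "M \<le> 1"
    unfolding M_def by auto
  then obtain \<alpha> \<beta> where \<alpha>: "0 \<le> \<alpha>" "\<alpha> \<le> 2" and \<beta>: "d/4 \<le> \<beta>" "\<beta> * M = d/4"
    and \<alpha>\<beta>: "\<alpha>\<^sup>2 * inner n n + \<beta>\<^sup>2 * M = 3/4"
    using exists_sphere_coefficients[OF nn _ _ d dle] by blast
  have mn: "inner m n = 0"
    using nxy by (simp add: m_def midpoint_def inner_add_left)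
  define Q where "Q = \<alpha> *\<^sub>R n + \<beta> *\<^sub>R m"
  have "inner (x - y) Q = 0" "inner Q Q = 3/4" "inner x Q = d / 4"
    using nxy m mn \<alpha>\<beta> \<beta>
    by (simp_all add: Q_def inner_diff_left inner_add_left inner_add_right inner_commute
        power2_eq_square algebra_simps)
  moreover have "0 < inner a Q" if aA: "a \<in> A" for a
  proof -
    have "31/32 \<le> inner a x" "31/32 \<le> inner a y"
      using A aA nx ny inner_ge_of_close_unit by blast+
    hence "31/32 \<le> inner a m"
      by (simp add: m_def midpoint_def inner_add_right)
    hence "(d/4) * (31/32) \<le> \<beta> * inner a m"
      using \<beta> d by (intro mult_mono) auto
    moreover have "2 * (- d/50) \<le> \<alpha> * (- d/50)"
      using \<alpha> d by (intro mult_right_mono_neg) auto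
    moreover have "\<alpha> * (- d/50) \<le> \<alpha> * inner a n"
      using A aA \<alpha> by (intro mult_left_mono) auto
    moreover have "inner a Q = \<alpha> * inner a n + \<beta> * inner a m"
      by (simp add: Q_def inner_add_right)
    ultimately show ?thesis
      using d by linarith
  qed
  ultimately show ?thesis
    using xy by (auto simp: balanced_chord_def d_def)
qed

lemma exists_origin_support_point:
  fixes A :: "(real^4) set"
  assumes A: "compact A" "A \<noteq> {}" and pos: "\<forall>a\<in>A. 0 < a$1"
  shows "\<exists>x\<in>A. \<exists>e. e \<noteq> 0 \<and> inner x e = 0 \<and> (\<forall>a\<in>A. 0 \<le> inner a e)"
proof -
  define f where "f a = a$2 / a$1" for a :: "real^4"
  have "continuous_on A f"
    unfolding f_def using pos by (intro continuous_intros) auto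
  then obtain x where x: "x \<in> A" and xmin: "\<forall>a\<in>A. f x \<le> f a"
    using continuous_attains_inf[OF A] by blast
  define e :: "real^4" where "e = axis 2 1 - f x *\<^sub>R qone"
  have ie: "inner a e = a$2 - f x * a$1" for a
    by (simp add: e_def inner_diff_right inner_vec4 qone_def axis_def)
  have "e $ 2 = 1"
    by (simp add: e_def qone_def axis_def)
  moreover have "inner x e = 0"
    using pos x by (simp add: ie f_def less_imp_neq[symmetric])
  moreover have "0 \<le> inner a e" if "a \<in> A" for a
    using xmin pos that by (simp add: ie f_def le_divide_eq)
  ultimately show ?thesis
    using x by (metis zero_index zero_neq_one)
qed

text \<open>Tilting \<open>e\<close> towards \<open>v\<close> as far as the half-space \<open>0 \<le> inner a e\<close> keeps containing \<open>A\<close>: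
  if all points of \<open>A\<close> stayed above a cone of positive slope around \<open>x\<close>, one could tilt further.\<close>

lemma exists_maximal_tilt:
  fixes A :: "'a::real_inner set"
  assumes a0: "a0 \<in> A" "inner a0 v < 0" and v: "v \<noteq> 0" "inner x v = 0"
    and e: "inner x e = 0" "\<forall>a\<in>A. 0 \<le> inner a e"
  shows "\<exists>t. (\<forall>a\<in>A. 0 \<le> inner a (e + t *\<^sub>R v)) \<and>
           (\<forall>\<sigma>>0. \<exists>a\<in>A. a \<noteq> x \<and> inner a (e + t *\<^sub>R v) < \<sigma> * norm (a - x))"
proof -
  define S where "S = {t. \<forall>a\<in>A. 0 \<le> inner a e + t * inner a v}"
  have "0 \<in> S"
    using e by (simp add: S_def)
  have bdd: "bdd_above S"
  proof (rule bdd_aboveI)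
    fix t assume "t \<in> S"
    hence "0 \<le> inner a0 e + t * inner a0 v"
      using a0 by (simp add: S_def)
    thus "t \<le> inner a0 e / (- inner a0 v)"
      using a0 by (subst pos_le_divide_eq) (auto simp: algebra_simps)
  qed
  have "S = (\<Inter>a\<in>A. {t. 0 \<le> inner a e + t * inner a v})"
    by (auto simp: S_def)
  hence "closed S"
    by (simp add: closed_INT closed_Collect_le continuous_intros)
  hence tS: "Sup S \<in> S"
    using closed_contains_Sup[OF _ bdd] \<open>0 \<in> S\<close> by auto
  have "\<exists>a\<in>A. a \<noteq> x \<and> inner a e + Sup S * inner a v < \<sigma> * norm (a - x)" if \<sigma>: "0 < \<sigma>" for \<sigma>
  proof (rule ccontr)
    assume "\<not> ?thesis"
    hence above: "\<sigma> * norm (a - x) \<le> inner a e + Sup S * inner a v" if "a \<in> A" "a \<noteq> x" for a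
      using that by (auto simp: not_less)
    define h where "h = \<sigma> / norm v"
    have h: "0 < h"
      using \<sigma> v by (simp add: h_def)
    have "0 \<le> inner a e + (Sup S + h) * inner a v" if a: "a \<in> A" for a
    proof (cases "a = x")
      case False
      have "- inner a v \<le> norm (a - x) * norm v"
        using norm_cauchy_schwarz[of "x - a" v] v by (simp add: inner_diff_left norm_minus_commute)
      hence "h * (- inner a v) \<le> h * (norm (a - x) * norm v)"
        using h by (intro mult_left_mono) auto
      also have "\<dots> = \<sigma> * norm (a - x)"
        using v by (simp add: h_def)
      finally show ?thesis
        using above[OF a False] by (simp add: algebra_simps)
    qed (use e v in simp)
    hence "Sup S + h \<in> S"
      by (simp add: S_def)
    hence "Sup S + h \<le> Sup S"
      using bdd by (rule cSup_upper)
    thus False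
      using h by simp
  qed
  thus ?thesis
    using tS by (auto simp: S_def inner_add_right)
qed

lemma exists_tangent_support:
  fixes A :: "'a::euclidean_space set"
  assumes dim: "2 < DIM('a)" and A: "x \<in> A" "a2 \<in> A" "a2 \<noteq> x"
    and e: "e \<noteq> 0" "inner x e = 0" "\<forall>a\<in>A. 0 \<le> inner a e"
  shows "\<exists>e'. e' \<noteq> 0 \<and> inner x e' = 0 \<and> (\<forall>a\<in>A. 0 \<le> inner a e') \<and>
           (\<forall>\<sigma>>0. \<exists>a\<in>A. a \<noteq> x \<and> inner a e' < \<sigma> * norm (a - x))"
proof -
  have "dim {x, e} \<le> card {x, e}"
    by (rule dim_le_card') simp
  also have "\<dots> \<le> 2"
    by (simp add: card_insert_le_m1)
  finally have "dim {x, e} < DIM('a)"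
    using dim by linarith
  then obtain w where w: "w \<noteq> 0" "\<And>y. y \<in> span {x, e} \<Longrightarrow> orthogonal w y"
    using orthogonal_to_subspace_exists by blast
  have wx: "inner x w = 0" and we: "inner e w = 0"
    using w(2)[of x] w(2)[of e] by (auto simp: span_base orthogonal_def inner_commute)
  show ?thesis
  proof (cases "\<forall>a\<in>A. inner a w = 0")
    case True
    thus ?thesis
      using A w wx by (intro exI[of _ w]) auto
  next
    case False
    then obtain a0 where a0: "a0 \<in> A" "inner a0 w \<noteq> 0"
      by blast
    define v where "v = (if inner a0 w < 0 then w else - w)"
    have v: "inner a0 v < 0" "v \<noteq> 0" "inner x v = 0" "inner e v = 0"
      using a0 w wx we by (auto simp: v_def)
    obtain t where t: "\<forall>a\<in>A. 0 \<le> inner a (e + t *\<^sub>R v)"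
      "\<forall>\<sigma>>0. \<exists>a\<in>A. a \<noteq> x \<and> inner a (e + t *\<^sub>R v) < \<sigma> * norm (a - x)"
      using exists_maximal_tilt[OF a0(1) v(1,2,3) e(2,3)] by blast
    have "inner e (e + t *\<^sub>R v) \<noteq> 0"
      using e v by (simp add: inner_add_right)
    hence "e + t *\<^sub>R v \<noteq> 0"
      by auto
    thus ?thesis
      using t e v by (intro exI[of _ "e + t *\<^sub>R v"]) (simp add: inner_add_right)
  qed
qed

lemma exists_flat_chord:
  fixes A :: "'a::real_inner set"
  assumes A: "compact A" "x \<in> A" and e: "e \<noteq> 0" "inner x e = 0" "\<forall>a\<in>A. 0 \<le> inner a e"
    and tangent: "\<forall>\<sigma>>0. \<exists>a\<in>A. a \<noteq> x \<and> inner a e < \<sigma> * norm (a - x)"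
  shows "\<exists>y\<in>A. y \<noteq> x \<and> (\<exists>e. norm e = 1 \<and> inner x e = 0 \<and> 0 \<le> inner y e / norm (x - y) \<and>
     inner y e / norm (x - y) \<le> 1/100 \<and>
     (\<forall>a\<in>A. - norm (x - y) / 100 \<le> inner a e - (inner y e / norm (x - y)) * norm (a - x)))"
proof -
  define u where "u = (1 / norm e) *\<^sub>R e"
  have u: "norm u = 1" "inner x u = 0" "\<forall>a\<in>A. 0 \<le> inner a u"
    using e by (simp_all add: u_def)
  have "0 < norm e / 100"
    using e by simp
  then obtain a1 where a1: "a1 \<in> A" "a1 \<noteq> x" "inner a1 e < norm e / 100 * norm (a1 - x)"
    using tangent by blast
  define r where "r = norm (a1 - x)"
  have r: "0 < r" "inner a1 u < r / 100"
    using a1 e by (simp_all add: r_def u_def field_simps)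
  define Ar where "Ar = A \<inter> {a. r \<le> norm (a - x)}"
  have "compact Ar"
    unfolding Ar_def by (intro compact_Int_closed A closed_Collect_le continuous_intros)
  define slope where "slope a = inner a u / norm (a - x)" for a
  have "continuous_on Ar slope"
    unfolding slope_def using r by (auto simp: Ar_def intro!: continuous_intros)
  moreover have "a1 \<in> Ar"
    using a1 by (simp add: Ar_def r_def)
  ultimately obtain y where y: "y \<in> Ar" and ymin: "\<forall>a\<in>Ar. slope y \<le> slope a"
    using continuous_attains_inf[OF \<open>compact Ar\<close>] by blast
  define d where "d = norm (x - y)"
  have yA: "y \<in> A" and rd: "r \<le> d"
    using y by (auto simp: Ar_def d_def norm_minus_commute)
  have d: "0 < d" "y \<noteq> x"
    using rd r by (auto simp: d_def)
  define s where "s = slope y"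
  have s_eq: "s = inner y u / d"
    by (simp add: s_def slope_def d_def norm_minus_commute)
  have s: "0 \<le> s" "s \<le> 1/100"
  proof -
    show "0 \<le> s"
      using u yA d by (simp add: s_eq)
    have "slope a1 < 1/100"
      using r by (simp add: slope_def r_def field_simps)
    thus "s \<le> 1/100"
      using ymin \<open>a1 \<in> Ar\<close> by (fastforce simp: s_def)
  qed
  have "- d / 100 \<le> inner a u - s * norm (a - x)" if a: "a \<in> A" for a
  proof (cases "r \<le> norm (a - x)")
    case True
    hence "s * norm (a - x) \<le> slope a * norm (a - x)"
      using a ymin by (intro mult_right_mono) (auto simp: Ar_def s_def)
    also have "\<dots> = inner a u"
      using True r u by (simp add: slope_def)
    finally show ?thesis
      using d by simp
  next
    case False
    have "s * norm (a - x) \<le> (1/100) * d"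
      using s False rd by (intro mult_mono) auto
    thus ?thesis
      using u a by fastforce
  qed
  thus ?thesis
    using yA d u s unfolding s_eq d_def by (intro bexI[of _ y]) auto
qed

lemma exists_balanced_chord:
  fixes A :: "(real^4) set"
  assumes A: "compact A" "A \<subseteq> S3" "A \<subseteq> cball qone (1/8)" "infinite A"
  shows "\<exists>x y Q. balanced_chord A x y Q"
proof -
  have unit: "\<forall>a\<in>A. norm a = 1"
    using A(2) by (auto simp: S3_def)
  have close: "norm (a - b) \<le> 1/4" if "a \<in> A" "b \<in> A" for a b
  proof -
    have "dist a qone \<le> 1/8" "dist b qone \<le> 1/8"
      using that A(3) by (auto simp: dist_commute)
    thus ?thesis
      using dist_triangle2[of a b qone] by (simp add: dist_norm)
  qed
  have "0 < a$1" if "a \<in> A" for a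
  proof -
    have "\<bar>(a - qone)$1\<bar> \<le> 1/8"
      using that A(3) component_le_norm_cart[of "a - qone" 1] by (auto simp: dist_norm norm_minus_commute)
    hence "- (a - qone)$1 \<le> 1/8"
      by (rule abs_le_D2)
    thus ?thesis
      by (simp add: qone_component)
  qed
  moreover have "A \<noteq> {}"
    using A(4) by auto
  ultimately obtain x e where x: "x \<in> A" and e: "e \<noteq> 0" "inner x e = 0" "\<forall>a\<in>A. 0 \<le> inner a e"
    using exists_origin_support_point[OF A(1)] by blast
  obtain a2 where a2: "a2 \<in> A" "a2 \<noteq> x"
    using infinite_imp_nonempty[OF infinite_remove[OF A(4), of x]] by blast
  obtain e' where "e' \<noteq> 0" "inner x e' = 0" "\<forall>a\<in>A. 0 \<le> inner a e'"
    "\<forall>\<sigma>>0. \<exists>a\<in>A. a \<noteq> x \<and> inner a e' < \<sigma> * norm (a - x)"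
    using exists_tangent_support[OF _ x a2 e] by auto
  then obtain y e2 where y: "y \<in> A" "y \<noteq> x" and e2: "norm e2 = 1" "inner x e2 = 0"
    "0 \<le> inner y e2 / norm (x - y)" "inner y e2 / norm (x - y) \<le> 1/100"
    "\<forall>a\<in>A. - norm (x - y) / 100 \<le> inner a e2 - (inner y e2 / norm (x - y)) * norm (a - x)"
    using exists_flat_chord[OF A(1) x] by blast
  obtain n where "inner x n = 0" "inner y n = 0" "1/2 \<le> inner n n"
    "\<forall>a\<in>A. - norm (x - y) / 50 \<le> inner a n"
    using exists_chord_normal[of x y e2 A] unit x y e2 close[OF x y(1)] by auto
  thus ?thesis
    using balanced_chord_of_normal[of x A y n] x y unit close by auto
qed

lemma infinite_S3_near_qone: "infinite (S3 \<inter> ball qone r)" if "0 < r"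
proof -
  have "qone $ 1 \<noteq> (- qone) $ 1"
    by (simp add: qone_component)
  moreover have "qone \<in> S3" "- qone \<in> S3"
    by (simp_all add: S3_def)
  ultimately have "S3 \<noteq> {z}" for z
    by (metis singletonD)
  hence "qone islimpt S3"
    by (intro connected_imp_perfect) (auto simp: S3_def connected_sphere)
  thus ?thesis
    using that by (simp add: islimpt_eq_infinite_ball)
qed

lemma closed_k_network_member_near_qone:
  assumes "closed_k_network (top_of_set S3) \<N>"
  shows "\<exists>A\<in>\<N>. compact A \<and> A \<subseteq> S3 \<and> A \<subseteq> cball qone (1/8) \<and> infinite A"
proof -
  let ?U = "S3 \<inter> ball qone (1/8)" and ?K = "S3 \<inter> cball qone (1/16)"
  have "openin (top_of_set S3) ?U"
    by (rule openin_open_Int) simp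
  moreover have "compactin (top_of_set S3) ?K"
    by (simp add: compactin_subtopology S3_def compact_Int_closed)
  moreover have "?K \<subseteq> ?U"
    by auto
  ultimately obtain \<F> where \<F>: "finite \<F>" "\<F> \<subseteq> \<N>" "?K \<subseteq> \<Union>\<F>" "\<Union>\<F> \<subseteq> ?U"
    using assms unfolding closed_k_network_def by (elim conjE allE impE) auto
  have "S3 \<inter> ball qone (1/16) \<subseteq> \<Union>\<F>"
    using \<F>(3) by auto
  hence "infinite (\<Union>\<F>)"
    using infinite_S3_near_qone[of "1/16"] finite_subset by auto
  then obtain A where A: "A \<in> \<F>" "infinite A"
    using \<F>(1) finite_Union by auto
  have "closedin (top_of_set S3) A"
    using assms A(1) \<F>(2) by (auto simp: closed_k_network_def)
  hence "compact A" "A \<subseteq> S3"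
    by (auto simp: S3_def dest: closedin_compact[OF compact_sphere] closedin_imp_subset)
  moreover have "A \<subseteq> cball qone (1/8)"
    using A(1) \<F>(4) by auto
  ultimately show ?thesis
    using A \<F>(2) by blast
qed

theorem corollary1p5:
  shows "\<not> (\<exists>\<N>. closed_k_network (top_of_set S3) \<N> \<and> binary \<N> \<and>
            (\<forall>A\<in>\<N>. \<forall>x\<in>S3. \<forall>y\<in>S3. (\<lambda>a. qmult (qmult x a) y) ` A \<in> \<N>))"
proof
  assume "\<exists>\<N>. closed_k_network (top_of_set S3) \<N> \<and> binary \<N> \<and>
            (\<forall>A\<in>\<N>. \<forall>x\<in>S3. \<forall>y\<in>S3. (\<lambda>a. qmult (qmult x a) y) ` A \<in> \<N>)"
  then obtain \<N> where kn: "closed_k_network (top_of_set S3) \<N>" and bin: "binary \<N>"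
    and inv: "S3_invariant \<N>"
    unfolding S3_invariant_def by blast
  obtain A where A: "A \<in> \<N>" "compact A" "A \<subseteq> S3" "A \<subseteq> cball qone (1/8)" "infinite A"
    using closed_k_network_member_near_qone[OF kn] by blast
  then obtain x y Q where "balanced_chord A x y Q"
    using exists_balanced_chord by blast
  thus False
    using no_balanced_chord[OF bin inv A(1,3)] by blast
qed

end
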